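(* Let $\mathcal{A}$ be an Ershov $\mathcal{C}$-algebra. Then $\mathcal{A}$ is equationally Noetherian if and only if the subalgebra $\mathcal{C}$ is finite.
   Context: An Ershov algebra is a structure $\langle A; \vee, \wedge, \setminus, 0\rangle$ such that $\langle A;\vee,\wedge\rangle$ is a distributive lattice with least element $0$, and $b \setminus a$ is the relative complement: the unique $z$ with $z \wedge a = 0$ and $z \vee a = a \vee b$. An Ershov $\mathcal{C}$-algebra is an Ershov algebra $\mathcal{A}$ together with a distinguished subalgebra $\mathcal{C}$ whose elements are added as constant symbols; $\mathcal{L}$ is the language $\{\vee,\wedge,\setminus,0\}$ plus these constants. An equation in variables $\bar{x}=(x_1,\dots,x_n)$ is $t(\bar x)=s(\bar x)$ with $t,s$ terms of $\mathcal{L}$; a system of equations is any (possibly infinite) set of such equations, and its solution set is the set of tuples in $A^n$ satisfying all of them. $\mathcal{A}$ is equationally Noetherian if for every $n$ every system of equations in $n$ variables is equivalent over $\mathcal{A}$ (has the same solution set) to some finite subsystem of it. *)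

theory Defs
  imports Main
begin

text \<open>An Ershov algebra with carrier the whole type 'a, given by its operations
  join (sup), meet (inf), relative complement (diff, b \ a = diff b a) and 0.\<close>

definition ershov_algebra ::
  "('a \<Rightarrow> 'a \<Rightarrow> 'a) \<Rightarrow> ('a \<Rightarrow> 'a \<Rightarrow> 'a) \<Rightarrow> ('a \<Rightarrow> 'a \<Rightarrow> 'a) \<Rightarrow> 'a \<Rightarrow> bool" where
  "ershov_algebra jn mt df z \<longleftrightarrow>
     (\<forall>x y w. jn (jn x y) w = jn x (jn y w)) \<and>
     (\<forall>x y w. mt (mt x y) w = mt x (mt y w)) \<and>
     (\<forall>x y. jn x y = jn y x) \<and>
     (\<forall>x y. mt x y = mt y x) \<and>
     (\<forall>x y. jn x (mt x y) = x) \<and>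
     (\<forall>x y. mt x (jn x y) = x) \<and>
     (\<forall>x y w. mt x (jn y w) = jn (mt x y) (mt x w)) \<and>
     (\<forall>x. jn z x = x) \<and>
     (\<forall>a b. mt (df b a) a = z \<and> jn (df b a) a = jn a b \<and>
            (\<forall>w. mt w a = z \<and> jn w a = jn a b \<longrightarrow> w = df b a))"

definition ershov_subalgebra ::
  "('a \<Rightarrow> 'a \<Rightarrow> 'a) \<Rightarrow> ('a \<Rightarrow> 'a \<Rightarrow> 'a) \<Rightarrow> ('a \<Rightarrow> 'a \<Rightarrow> 'a) \<Rightarrow> 'a \<Rightarrow> 'a set \<Rightarrow> bool" where
  "ershov_subalgebra jn mt df z C \<longleftrightarrow>
     z \<in> C \<and> (\<forall>x\<in>C. \<forall>y\<in>C. jn x y \<in> C \<and> mt x y \<in> C \<and> df x y \<in> C)"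

datatype 'a trm = Var nat | Cst 'a | Zero | Jn "'a trm" "'a trm" | Mt "'a trm" "'a trm"
  | Df "'a trm" "'a trm"

fun eval_trm ::
  "('a \<Rightarrow> 'a \<Rightarrow> 'a) \<Rightarrow> ('a \<Rightarrow> 'a \<Rightarrow> 'a) \<Rightarrow> ('a \<Rightarrow> 'a \<Rightarrow> 'a) \<Rightarrow> 'a \<Rightarrow> 'a list \<Rightarrow> 'a trm \<Rightarrow> 'a" where
  "eval_trm jn mt df z xs (Var i) = xs ! i"
| "eval_trm jn mt df z xs (Cst c) = c"
| "eval_trm jn mt df z xs Zero = z"
| "eval_trm jn mt df z xs (Jn t s) = jn (eval_trm jn mt df z xs t) (eval_trm jn mt df z xs s)"
| "eval_trm jn mt df z xs (Mt t s) = mt (eval_trm jn mt df z xs t) (eval_trm jn mt df z xs s)"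
| "eval_trm jn mt df z xs (Df t s) = df (eval_trm jn mt df z xs t) (eval_trm jn mt df z xs s)"

fun wf_trm :: "'a set \<Rightarrow> nat \<Rightarrow> 'a trm \<Rightarrow> bool" where
  "wf_trm C n (Var i) = (i < n)"
| "wf_trm C n (Cst c) = (c \<in> C)"
| "wf_trm C n Zero = True"
| "wf_trm C n (Jn t s) = (wf_trm C n t \<and> wf_trm C n s)"
| "wf_trm C n (Mt t s) = (wf_trm C n t \<and> wf_trm C n s)"
| "wf_trm C n (Df t s) = (wf_trm C n t \<and> wf_trm C n s)"

definition sol_set ::
  "('a \<Rightarrow> 'a \<Rightarrow> 'a) \<Rightarrow> ('a \<Rightarrow> 'a \<Rightarrow> 'a) \<Rightarrow> ('a \<Rightarrow> 'a \<Rightarrow> 'a) \<Rightarrow> 'a \<Rightarrow> nat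
    \<Rightarrow> ('a trm \<times> 'a trm) set \<Rightarrow> 'a list set" where
  "sol_set jn mt df z n S =
     {xs. length xs = n \<and> (\<forall>(t, s)\<in>S. eval_trm jn mt df z xs t = eval_trm jn mt df z xs s)}"

definition equationally_noetherian ::
  "('a \<Rightarrow> 'a \<Rightarrow> 'a) \<Rightarrow> ('a \<Rightarrow> 'a \<Rightarrow> 'a) \<Rightarrow> ('a \<Rightarrow> 'a \<Rightarrow> 'a) \<Rightarrow> 'a \<Rightarrow> 'a set \<Rightarrow> bool" where
  "equationally_noetherian jn mt df z C \<longleftrightarrow>
     (\<forall>n S. (\<forall>(t, s)\<in>S. wf_trm C n t \<and> wf_trm C n s) \<longrightarrow>
        (\<exists>S0. S0 \<subseteq> S \<and> finite S0 \<and> sol_set jn mt df z n S0 = sol_set jn mt df z n S))"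

end

theory Submission
  imports Defs "HOL-Library.FuncSet"
begin

text \<open>
  Every Ershov algebra embeds into a power of the two-element algebra \<open>2\<close>: by the prime
  filter theorem, distinct elements are separated by a homomorphism onto \<open>2\<close>. Hence an
  equation \<open>t = s\<close> in \<open>n\<close> variables holds at a tuple iff it holds under every such
  homomorphism, and there it only depends on the Boolean truth tables of \<open>t\<close> and \<open>s\<close> as
  functions of the \<open>n\<close> variables and the constants. For finite \<open>\<C>\<close> there are only finitely many
  truth tables, so any system is equivalent to a finite subsystem.

  Conversely, suppose \<open>\<A>\<close> is equationally Noetherian. The system \<open>{c \<and> x = c | c \<in> \<C>}\<close> is
  equivalent to a finite subsystem, which is solved by the join of its constants; so \<open>\<C>\<close> has a
  greatest element \<open>u\<close>. Likewise \<open>{x \<and> c\<^sub>i = x | i \<in> \<nat>}\<close> for a strictly descending chain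
  \<open>c\<^sub>i\<close> in \<open>\<C>\<close> would be solved by some \<open>c\<^sub>k\<close> yet not by it, so \<open>\<C>\<close> has no infinite
  descending chains. Well-founded induction then shows that every principal ideal of \<open>\<C>\<close> is
  finite: if \<open>0 < v < u\<close> in \<open>\<C>\<close>, then each \<open>x \<le> u\<close> splits as \<open>(x \<and> v) \<or> (x \<and> (u \ v))\<close>
  with both \<open>v\<close> and \<open>u \ v\<close> strictly below \<open>u\<close>.
\<close>

lemma finite_subsystem_by_key:
  assumes "finite (key ` S)"
    and "\<And>e e'. e \<in> S \<Longrightarrow> e' \<in> S \<Longrightarrow> key e = key e' \<Longrightarrow> A e = A e'"
  shows "\<exists>S0\<subseteq>S. finite S0 \<and> (\<Inter>e\<in>S0. A e) = (\<Inter>e\<in>S. A e)"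
proof -
  define rep where "rep k = (SOME e. e \<in> S \<and> key e = k)" for k
  have rep: "rep (key e) \<in> S \<and> key (rep (key e)) = key e" if "e \<in> S" for e
    unfolding rep_def by (rule someI_ex) (use that in blast)
  define S0 where "S0 = rep ` key ` S"
  have "S0 \<subseteq> S" using rep unfolding S0_def by blast
  moreover have "finite S0" unfolding S0_def using assms(1) by simp
  moreover have "(\<Inter>e'\<in>S0. A e') \<subseteq> A e" if e: "e \<in> S" for e
  proof -
    have "rep (key e) \<in> S0" unfolding S0_def using e by blast
    moreover have "A (rep (key e)) = A e" using assms(2) rep[OF e] e by blast
    ultimately show ?thesis by blast
  qed
  then have "(\<Inter>e\<in>S0. A e) = (\<Inter>e\<in>S. A e)" using \<open>S0 \<subseteq> S\<close> by blast
  ultimately show ?thesis by blast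
qed

lemma sol_set_as_Inter:
  "sol_set jn mt df z n S = {xs. length xs = n} \<inter>
     (\<Inter>e\<in>S. {xs. eval_trm jn mt df z xs (fst e) = eval_trm jn mt df z xs (snd e)})"
  unfolding sol_set_def by (auto simp: case_prod_beta)

lemma equationally_noetherianD:
  assumes "equationally_noetherian jn mt df z C"
    and "\<forall>i\<in>I. wf_trm C n (fst (g i)) \<and> wf_trm C n (snd (g i))"
  shows "\<exists>I0\<subseteq>I. finite I0 \<and> sol_set jn mt df z n (g ` I0) = sol_set jn mt df z n (g ` I)"
proof -
  have "\<forall>(t, s)\<in>g ` I. wf_trm C n t \<and> wf_trm C n s" using assms(2) by auto
  then obtain S0 where S0: "S0 \<subseteq> g ` I" "finite S0"
    "sol_set jn mt df z n S0 = sol_set jn mt df z n (g ` I)"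
    using assms(1)[unfolded equationally_noetherian_def, rule_format] by meson
  moreover obtain I0 where "I0 \<subseteq> I" "finite I0" "S0 = g ` I0"
    using finite_subset_image[OF S0(2,1)] by blast
  ultimately show ?thesis by blast
qed

subsection \<open>Boolean evaluation of terms\<close>

fun beval :: "(nat \<Rightarrow> bool) \<Rightarrow> ('a \<Rightarrow> bool) \<Rightarrow> 'a trm \<Rightarrow> bool" where
  "beval \<rho> \<sigma> (Var i) = \<rho> i"
| "beval \<rho> \<sigma> (Cst c) = \<sigma> c"
| "beval \<rho> \<sigma> Zero = False"
| "beval \<rho> \<sigma> (Jn t s) = (beval \<rho> \<sigma> t \<or> beval \<rho> \<sigma> s)"
| "beval \<rho> \<sigma> (Mt t s) = (beval \<rho> \<sigma> t \<and> beval \<rho> \<sigma> s)"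
| "beval \<rho> \<sigma> (Df t s) = (beval \<rho> \<sigma> t \<and> \<not> beval \<rho> \<sigma> s)"

lemma beval_cong:
  "wf_trm C n t \<Longrightarrow> (\<forall>i<n. \<rho> i = \<rho>' i) \<Longrightarrow> (\<forall>c\<in>C. \<sigma> c = \<sigma>' c)
    \<Longrightarrow> beval \<rho> \<sigma> t = beval \<rho>' \<sigma>' t"
  by (induction t) auto

definition truth_table :: "'a set \<Rightarrow> nat \<Rightarrow> 'a trm \<Rightarrow> nat set \<times> 'a set \<Rightarrow> bool" where
  "truth_table C n t = (\<lambda>(I, D) \<in> Pow {..<n} \<times> Pow C. beval (\<lambda>i. i \<in> I) (\<lambda>c. c \<in> D) t)"

lemma beval_eq_truth_table:
  assumes "wf_trm C n t"
  shows "beval \<rho> \<sigma> t = truth_table C n t ({i. i < n \<and> \<rho> i}, {c\<in>C. \<sigma> c})"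
proof -
  have "truth_table C n t ({i. i < n \<and> \<rho> i}, {c\<in>C. \<sigma> c})
      = beval (\<lambda>i. i < n \<and> \<rho> i) (\<lambda>c. c \<in> C \<and> \<sigma> c) t"
    unfolding truth_table_def by auto
  also have "\<dots> = beval \<rho> \<sigma> t" by (rule beval_cong[OF assms]) auto
  finally show ?thesis by simp
qed

lemma finite_truth_tables:
  assumes "finite C"
  shows "finite (range (truth_table C n))"
proof (rule finite_subset)
  show "range (truth_table C n) \<subseteq> Pow {..<n} \<times> Pow C \<rightarrow>\<^sub>E (UNIV :: bool set)"
    unfolding truth_table_def by (simp add: image_subset_iff)
  show "finite (Pow {..<n} \<times> Pow C \<rightarrow>\<^sub>E (UNIV :: bool set))"
    using assms by (simp add: finite_PiE)
qed

locale ershov =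
  fixes jn mt df :: "'a \<Rightarrow> 'a \<Rightarrow> 'a" and z :: 'a
  assumes join_assoc: "jn (jn x y) w = jn x (jn y w)"
    and meet_assoc: "mt (mt x y) w = mt x (mt y w)"
    and join_comm: "jn x y = jn y x"
    and meet_comm: "mt x y = mt y x"
    and join_meet_absorb: "jn x (mt x y) = x"
    and meet_join_absorb: "mt x (jn x y) = x"
    and meet_join_distrib: "mt x (jn y w) = jn (mt x y) (mt x w)"
    and zero_join: "jn z x = x"
    and meet_diff: "mt (df b a) a = z"
    and join_diff: "jn (df b a) a = jn a b"

lemma ershov_algebra_imp_ershov: "ershov_algebra jn mt df z \<Longrightarrow> ershov jn mt df z"
  unfolding ershov_algebra_def by (elim conjE, unfold_locales) meson+

context ershov
begin

definition leq :: "'a \<Rightarrow> 'a \<Rightarrow> bool" (infix "\<preceq>" 50) where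
  "x \<preceq> y \<longleftrightarrow> mt x y = x"

lemma meet_idem: "mt x x = x"
  by (metis join_meet_absorb meet_join_absorb)

lemma leq_refl: "x \<preceq> x"
  unfolding leq_def by (rule meet_idem)

lemma leq_trans: "x \<preceq> y \<Longrightarrow> y \<preceq> w \<Longrightarrow> x \<preceq> w"
  unfolding leq_def by (metis meet_assoc)

lemma leq_antisym: "x \<preceq> y \<Longrightarrow> y \<preceq> x \<Longrightarrow> x = y"
  unfolding leq_def by (metis meet_comm)

lemma leq_join1: "x \<preceq> jn x y"
  unfolding leq_def by (rule meet_join_absorb)

lemma leq_join2: "y \<preceq> jn x y"
  using leq_join1 join_comm by metis

lemma leq_meet1: "mt x y \<preceq> x"
  unfolding leq_def by (metis meet_assoc meet_comm meet_idem)

lemma leq_meet2: "mt x y \<preceq> y"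
  using leq_meet1 meet_comm by metis

lemma meet_greatest: "w \<preceq> x \<Longrightarrow> w \<preceq> y \<Longrightarrow> w \<preceq> mt x y"
  unfolding leq_def by (metis meet_assoc)

lemma join_least: "x \<preceq> b \<Longrightarrow> y \<preceq> b \<Longrightarrow> jn x y \<preceq> b"
  unfolding leq_def by (metis meet_comm meet_join_distrib)

lemma meet_mono_left: "x \<preceq> x' \<Longrightarrow> mt x y \<preceq> mt x' y"
  using meet_greatest leq_trans leq_meet1 leq_meet2 by metis

lemma zero_least: "z \<preceq> x"
  unfolding leq_def by (metis zero_join meet_join_absorb)

lemma diff_leq: "df x y \<preceq> x"
proof -
  let ?d = "df x y"
  have "?d = mt ?d (jn ?d y)" by (rule meet_join_absorb[symmetric])
  also have "\<dots> = mt ?d (jn y x)" by (simp add: join_diff)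
  also have "\<dots> = jn (mt ?d y) (mt ?d x)" by (rule meet_join_distrib)
  also have "\<dots> = mt ?d x" by (simp add: meet_diff zero_join)
  finally show ?thesis unfolding leq_def by simp
qed

lemma join_meet_diff: "x \<preceq> u \<Longrightarrow> jn (mt x v) (mt x (df u v)) = x"
proof -
  assume "x \<preceq> u"
  then have xu: "mt x u = x" unfolding leq_def .
  have "jn (mt x v) (mt x (df u v)) = mt x (jn (df u v) v)"
    by (simp add: meet_join_distrib join_comm)
  also have "\<dots> = mt x (jn v u)" by (simp add: join_diff)
  also have "\<dots> = x" by (simp add: meet_join_distrib xu join_comm join_meet_absorb)
  finally show ?thesis .
qed

subsection \<open>Prime filters\<close>

definition is_filter :: "'a set \<Rightarrow> bool" where
  "is_filter F \<longleftrightarrow> (\<forall>x\<in>F. \<forall>y\<in>F. mt x y \<in> F) \<and> (\<forall>x\<in>F. \<forall>y. x \<preceq> y \<longrightarrow> y \<in> F)"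

definition prime_filter :: "'a set \<Rightarrow> bool" where
  "prime_filter F \<longleftrightarrow> is_filter F \<and> (\<forall>x y. jn x y \<in> F \<longrightarrow> x \<in> F \<or> y \<in> F)"

lemma filter_meet_closed: "is_filter F \<Longrightarrow> x \<in> F \<Longrightarrow> y \<in> F \<Longrightarrow> mt x y \<in> F"
  unfolding is_filter_def by blast

lemma filter_upward_closed: "is_filter F \<Longrightarrow> x \<in> F \<Longrightarrow> x \<preceq> y \<Longrightarrow> y \<in> F"
  unfolding is_filter_def by blast

lemma is_filter_principal: "is_filter {y. a \<preceq> y}"
  unfolding is_filter_def using meet_greatest leq_trans by blast

lemma is_filter_Union_chain:
  assumes "chain\<^sub>\<subseteq> Ch" and "\<forall>F\<in>Ch. is_filter F"
  shows "is_filter (\<Union>Ch)"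
  unfolding is_filter_def
proof (intro conjI ballI allI impI)
  fix x y assume "x \<in> \<Union>Ch" "y \<in> \<Union>Ch"
  then obtain X Y where XY: "X \<in> Ch" "Y \<in> Ch" "x \<in> X" "y \<in> Y" by blast
  with assms(1) have "x \<in> X \<union> Y \<and> y \<in> X \<union> Y \<and> X \<union> Y \<in> Ch"
    unfolding chain_subset_def by (metis Un_iff sup.absorb1 sup.absorb2)
  then show "mt x y \<in> \<Union>Ch" using assms(2) filter_meet_closed by blast
next
  fix x y assume "x \<in> \<Union>Ch" "x \<preceq> y"
  then show "y \<in> \<Union>Ch" using assms(2) filter_upward_closed by blast
qed

lemma is_filter_adjoin:
  assumes "is_filter M"
  shows "is_filter {w. \<exists>f\<in>M. mt f x \<preceq> w}"
  unfolding is_filter_def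
proof (intro conjI ballI allI impI)
  fix w1 w2 assume "w1 \<in> {w. \<exists>f\<in>M. mt f x \<preceq> w}" "w2 \<in> {w. \<exists>f\<in>M. mt f x \<preceq> w}"
  then obtain f1 f2 where f: "f1 \<in> M" "f2 \<in> M" "mt f1 x \<preceq> w1" "mt f2 x \<preceq> w2" by blast
  have "mt (mt f1 f2) x \<preceq> mt w1 w2"
    using f(3,4) leq_trans meet_greatest meet_mono_left leq_meet1 leq_meet2 by metis
  then show "mt w1 w2 \<in> {w. \<exists>f\<in>M. mt f x \<preceq> w}"
    using filter_meet_closed[OF assms f(1,2)] by blast
qed (use leq_trans in blast)

lemma maximal_filter_prime:
  assumes M: "is_filter M" "b \<notin> M"
    and max: "\<And>F. is_filter F \<Longrightarrow> b \<notin> F \<Longrightarrow> M \<subseteq> F \<Longrightarrow> F = M"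
  shows "prime_filter M"
  unfolding prime_filter_def
proof (intro conjI allI impI M(1))
  fix x y assume xy: "jn x y \<in> M"
  have below_b: "\<exists>f\<in>M. mt f v \<preceq> b" if "v \<notin> M" for v
  proof (rule ccontr)
    let ?F = "{w. \<exists>f\<in>M. mt f v \<preceq> w}"
    assume "\<not> (\<exists>f\<in>M. mt f v \<preceq> b)"
    moreover have "M \<subseteq> ?F" using leq_meet1 by blast
    ultimately have "?F = M" using max is_filter_adjoin[OF M(1)] by blast
    moreover have "v \<in> ?F" using xy leq_meet2 by blast
    ultimately show False using that by blast
  qed
  show "x \<in> M \<or> y \<in> M"
  proof (rule ccontr)
    assume "\<not> (x \<in> M \<or> y \<in> M)"
    then obtain f g where fg: "f \<in> M" "g \<in> M" "mt f x \<preceq> b" "mt g y \<preceq> b"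
      using below_b by blast
    let ?h = "mt f g"
    have "mt ?h (jn x y) = jn (mt ?h x) (mt ?h y)" by (rule meet_join_distrib)
    also have "\<dots> \<preceq> b"
      using fg(3,4) by (meson join_least leq_trans meet_mono_left leq_meet1 leq_meet2)
    finally have "mt ?h (jn x y) \<preceq> b" .
    moreover have "mt ?h (jn x y) \<in> M" using fg(1,2) xy M(1) filter_meet_closed by blast
    ultimately show False using M filter_upward_closed by blast
  qed
qed

lemma prime_filter_exists:
  assumes "\<not> a \<preceq> b"
  shows "\<exists>M. prime_filter M \<and> a \<in> M \<and> b \<notin> M"
proof -
  let ?A = "{F. is_filter F \<and> a \<in> F \<and> b \<notin> F}"
  have principal: "{y. a \<preceq> y} \<in> ?A" using assms is_filter_principal leq_refl by blast
  have "\<exists>U\<in>?A. \<forall>X\<in>Ch. X \<subseteq> U" if "Ch \<in> chains ?A" for Ch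
  proof (cases "Ch = {}")
    case False
    with that have "\<Union>Ch \<in> ?A"
      using is_filter_Union_chain unfolding chains_def by blast
    then show ?thesis by blast
  qed (use principal in blast)
  then obtain M where "M \<in> ?A" and "\<forall>X\<in>?A. M \<subseteq> X \<longrightarrow> X = M"
    using Zorn_Lemma2 by blast
  then show ?thesis using maximal_filter_prime[of M b] by blast
qed

subsection \<open>Homomorphisms onto the two-element algebra\<close>

definition bool_hom :: "('a \<Rightarrow> bool) \<Rightarrow> bool" where
  "bool_hom h \<longleftrightarrow> (\<forall>x y. h (jn x y) = (h x \<or> h y)) \<and> (\<forall>x y. h (mt x y) = (h x \<and> h y))
     \<and> (\<forall>x y. h (df x y) = (h x \<and> \<not> h y)) \<and> \<not> h z"

lemma bool_hom_prime_filter: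
  assumes "prime_filter M" and "z \<notin> M"
  shows "bool_hom (\<lambda>w. w \<in> M)"
proof -
  have M: "is_filter M" and prime: "\<And>x y. jn x y \<in> M \<Longrightarrow> x \<in> M \<or> y \<in> M"
    using assms(1) unfolding prime_filter_def by blast+
  note up = filter_upward_closed[OF M]
  have "df x y \<in> M \<longleftrightarrow> x \<in> M \<and> y \<notin> M" for x y
  proof
    assume d: "df x y \<in> M"
    have "y \<notin> M" using filter_meet_closed[OF M d] meet_diff assms(2) by metis
    then show "x \<in> M \<and> y \<notin> M" using up[OF d diff_leq] by blast
  next
    assume "x \<in> M \<and> y \<notin> M"
    moreover from this have "jn (df x y) y \<in> M" using up leq_join2 join_diff by metis
    ultimately show "df x y \<in> M" using prime by blast
  qed
  moreover have "jn x y \<in> M \<longleftrightarrow> x \<in> M \<or> y \<in> M" for x y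
    using prime up leq_join1 leq_join2 by blast
  moreover have "mt x y \<in> M \<longleftrightarrow> x \<in> M \<and> y \<in> M" for x y
    using up leq_meet1 leq_meet2 filter_meet_closed[OF M] by blast
  ultimately show ?thesis
    unfolding bool_hom_def using assms(2) by blast
qed

lemma eq_iff_bool_homs_agree: "a = b \<longleftrightarrow> (\<forall>h. bool_hom h \<longrightarrow> h a = h b)"
proof
  show "\<forall>h. bool_hom h \<longrightarrow> h a = h b" if "a = b" using that by simp
next
  assume agree: "\<forall>h. bool_hom h \<longrightarrow> h a = h b"
  have "a \<preceq> b" if "\<forall>h. bool_hom h \<longrightarrow> h a = h b" for a b
  proof (rule ccontr)
    assume "\<not> a \<preceq> b"
    then obtain M where "prime_filter M" "a \<in> M" "b \<notin> M"
      using prime_filter_exists by blast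
    moreover from this have "z \<notin> M"
      using zero_least filter_upward_closed unfolding prime_filter_def by blast
    ultimately show False using bool_hom_prime_filter that by blast
  qed
  then show "a = b" using agree leq_antisym by metis
qed

lemma bool_hom_eval_trm:
  "bool_hom h \<Longrightarrow> h (eval_trm jn mt df z xs t) = beval (\<lambda>i. h (xs ! i)) h t"
  by (induction t) (auto simp: bool_hom_def)

lemma eval_eq_iff_truth_tables:
  assumes "wf_trm C n t" and "wf_trm C n s"
  shows "eval_trm jn mt df z xs t = eval_trm jn mt df z xs s \<longleftrightarrow>
    (\<forall>h. bool_hom h \<longrightarrow> truth_table C n t ({i. i < n \<and> h (xs ! i)}, {c\<in>C. h c})
                       = truth_table C n s ({i. i < n \<and> h (xs ! i)}, {c\<in>C. h c}))"
  by (subst eq_iff_bool_homs_agree)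
    (simp add: bool_hom_eval_trm beval_eq_truth_table[OF assms(1)] beval_eq_truth_table[OF assms(2)])

lemma finite_imp_equationally_noetherian:
  assumes "finite C"
  shows "equationally_noetherian jn mt df z C"
  unfolding equationally_noetherian_def
proof (intro allI impI)
  fix n and S :: "('a trm \<times> 'a trm) set"
  assume wf: "\<forall>(t, s)\<in>S. wf_trm C n t \<and> wf_trm C n s"
  define key where "key e = (truth_table C n (fst e), truth_table C n (snd e))" for e
  define sols where
    "sols e = {xs. eval_trm jn mt df z xs (fst e) = eval_trm jn mt df z xs (snd e)}" for e
  have "key ` S \<subseteq> range (truth_table C n) \<times> range (truth_table C n)"
    unfolding key_def by auto
  then have "finite (key ` S)"
    by (rule finite_subset) (simp add: finite_truth_tables[OF assms])
  moreover have "sols e = sols e'" if "e \<in> S" "e' \<in> S" "key e = key e'" for e e'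
  proof -
    obtain t s t' s' where e: "e = (t, s)" "e' = (t', s')" by (cases e, cases e') auto
    then have "wf_trm C n t" "wf_trm C n s" "wf_trm C n t'" "wf_trm C n s'"
      using wf that(1,2) by auto
    moreover have "truth_table C n t = truth_table C n t'" "truth_table C n s = truth_table C n s'"
      using that(3) unfolding e key_def by auto
    ultimately show ?thesis
      unfolding e sols_def by (simp add: eval_eq_iff_truth_tables)
  qed
  ultimately obtain S0 where S0: "S0 \<subseteq> S" "finite S0" "(\<Inter>e\<in>S0. sols e) = (\<Inter>e\<in>S. sols e)"
    using finite_subsystem_by_key[of key S sols] by blast
  have "sol_set jn mt df z n S' = {xs. length xs = n} \<inter> (\<Inter>e\<in>S'. sols e)" for S'
    unfolding sol_set_as_Inter sols_def ..
  then have "sol_set jn mt df z n S0 = sol_set jn mt df z n S" using S0(3) by simp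
  then show "\<exists>S0\<subseteq>S. finite S0 \<and> sol_set jn mt df z n S0 = sol_set jn mt df z n S"
    using S0(1,2) by blast
qed

subsection \<open>Equationally Noetherian implies finite\<close>

context
  fixes C :: "'a set"
  assumes sub: "ershov_subalgebra jn mt df z C"
begin

lemma subalgebra_closed:
  assumes "x \<in> C" "y \<in> C"
  shows "jn x y \<in> C" "mt x y \<in> C" "df x y \<in> C"
  using sub assms unfolding ershov_subalgebra_def by blast+

lemma finite_subset_has_upper_bound:
  "finite D \<Longrightarrow> D \<subseteq> C \<Longrightarrow> \<exists>u\<in>C. \<forall>c\<in>D. c \<preceq> u"
proof (induction D rule: finite_induct)
  case empty then show ?case using sub unfolding ershov_subalgebra_def by blast
next
  case (insert c D)
  then obtain u where "u \<in> C" "\<forall>d\<in>D. d \<preceq> u" by blast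
  then show ?case
    using insert.prems subalgebra_closed leq_join1 leq_join2 leq_trans by (metis insert_iff subsetD)
qed

lemma finite_principal_ideal:
  assumes wf: "wf {(x, y). x \<in> C \<and> y \<in> C \<and> x \<preceq> y \<and> x \<noteq> y}"
  shows "u \<in> C \<Longrightarrow> finite {x\<in>C. x \<preceq> u}"
  using wf
proof (induction u rule: wf_induct_rule)
  case (less u)
  show ?case
  proof (cases "\<exists>v\<in>C. v \<preceq> u \<and> v \<noteq> u \<and> v \<noteq> z")
    case True
    then obtain v where v: "v \<in> C" "v \<preceq> u" "v \<noteq> u" "v \<noteq> z" by blast
    define w where "w = df u v"
    have "w \<noteq> u"
      using v(2,4) meet_diff[of u v] meet_comm unfolding w_def leq_def by metis
    then have "finite {x\<in>C. x \<preceq> v}" "finite {x\<in>C. x \<preceq> w}"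
      using less v diff_leq subalgebra_closed unfolding w_def by auto
    moreover have "{x\<in>C. x \<preceq> u} \<subseteq> (\<lambda>(p, q). jn p q) ` ({x\<in>C. x \<preceq> v} \<times> {x\<in>C. x \<preceq> w})"
    proof
      fix x assume x: "x \<in> {x\<in>C. x \<preceq> u}"
      then have "x = jn (mt x v) (mt x w)" using join_meet_diff unfolding w_def by auto
      moreover have "mt x v \<in> C" "mt x w \<in> C"
        using x v(1) less.prems subalgebra_closed unfolding w_def by auto
      ultimately show "x \<in> (\<lambda>(p, q). jn p q) ` ({x\<in>C. x \<preceq> v} \<times> {x\<in>C. x \<preceq> w})"
        using leq_meet2 by force
    qed
    ultimately show ?thesis by (meson finite_SigmaI finite_imageI finite_subset)
  next
    case False
    then have "{x\<in>C. x \<preceq> u} \<subseteq> {z, u}" by auto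
    then show ?thesis by (rule finite_subset) simp
  qed
qed

context
  assumes en: "equationally_noetherian jn mt df z C"
begin

lemma equationally_noetherian_has_greatest: "\<exists>u\<in>C. \<forall>c\<in>C. c \<preceq> u"
proof -
  let ?g = "\<lambda>c. (Mt (Cst c) (Var 0), Cst c)"
  obtain D where D: "D \<subseteq> C" "finite D"
    and sol: "sol_set jn mt df z 1 (?g ` D) = sol_set jn mt df z 1 (?g ` C)"
    using equationally_noetherianD[OF en, of C 1 ?g] by auto
  obtain u where u: "u \<in> C" "\<forall>c\<in>D. c \<preceq> u"
    using finite_subset_has_upper_bound[OF D(2,1)] by blast
  then have "[u] \<in> sol_set jn mt df z 1 (?g ` D)"
    unfolding sol_set_def leq_def by auto
  then have "[u] \<in> sol_set jn mt df z 1 (?g ` C)" by (simp only: sol)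
  then have "\<forall>c\<in>C. c \<preceq> u"
    unfolding sol_set_def leq_def by auto
  with u(1) show ?thesis by blast
qed

lemma equationally_noetherian_wf:
  "wf {(x, y). x \<in> C \<and> y \<in> C \<and> x \<preceq> y \<and> x \<noteq> y}"
  unfolding wf_iff_no_infinite_down_chain
proof
  assume "\<exists>f. \<forall>i. (f (Suc i), f i) \<in> {(x, y). x \<in> C \<and> y \<in> C \<and> x \<preceq> y \<and> x \<noteq> y}"
  then obtain f where fC: "\<And>i. f i \<in> C"
    and step: "\<And>i. f (Suc i) \<preceq> f i \<and> f (Suc i) \<noteq> f i" by auto
  have antimono: "f k \<preceq> f i" if "i \<le> k" for i k
    using that by (induction k rule: dec_induct) (use leq_refl leq_trans step in blast)+
  let ?g = "\<lambda>i. (Mt (Var 0) (Cst (f i)), Var 0)"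
  obtain I where I: "finite I"
    and sol: "sol_set jn mt df z 1 (?g ` I) = sol_set jn mt df z 1 (range ?g)"
    using equationally_noetherianD[OF en, of UNIV 1 ?g] fC by auto
  define k where "k = Max (insert 0 I)"
  have "[f k] \<in> sol_set jn mt df z 1 (?g ` I)"
    using antimono I unfolding k_def sol_set_def leq_def by auto
  then have "[f k] \<in> sol_set jn mt df z 1 (range ?g)" by (simp only: sol)
  then have "f k \<preceq> f (Suc k)"
    unfolding sol_set_def leq_def by auto
  then show False using step leq_antisym by metis
qed

lemma equationally_noetherian_imp_finite: "finite C"
proof -
  obtain u where "u \<in> C" "\<forall>c\<in>C. c \<preceq> u"
    using equationally_noetherian_has_greatest by blast
  then have "C \<subseteq> {x\<in>C. x \<preceq> u}" "finite {x\<in>C. x \<preceq> u}"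
    using finite_principal_ideal[OF equationally_noetherian_wf] by auto
  then show ?thesis by (rule finite_subset)
qed

end

end

end

theorem mainTheorem4:
  fixes jn mt df :: "'a \<Rightarrow> 'a \<Rightarrow> 'a" and z :: 'a and C :: "'a set"
  assumes "ershov_algebra jn mt df z"
    and "ershov_subalgebra jn mt df z C"
  shows "equationally_noetherian jn mt df z C \<longleftrightarrow> finite C"
proof -
  interpret ershov jn mt df z
    using assms(1) by (rule ershov_algebra_imp_ershov)
  show ?thesis
    using equationally_noetherian_imp_finite[OF assms(2)] finite_imp_equationally_noetherian
    by blast
qed

end
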